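(* Let $L_1,L_2>0$, $\Omega=(0,L_1)\times(0,L_2)$, $\lambda\in\mathbb{R}\setminus\{0\}$, and $\mathcal{X}_1(\Omega)=\{\theta\in L^2(\Omega):\ \theta_y+\lambda\theta_x\in L^2(\Omega)\}$ with norm $(\|\theta\|_{L^2}^2+\|\theta_y+\lambda\theta_x\|_{L^2}^2)^{1/2}$. If $\theta\in\mathcal{X}_1(\Omega)$, then the traces of $\theta$ are defined on all of $\partial\Omega$: the traces at $x=0$ and $x=L_1$ belong to $H^{-1}(0,L_2)$ and the traces at $y=0$ and $y=L_2$ belong to $H^{-1}(0,L_1)$. Moreover the trace operators are linear and continuous, e.g. $\theta\mapsto\theta|_{x=0}$ is continuous from $\mathcal{X}_1(\Omega)$ into $H^{-1}(0,L_2)$.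
   Context: Derivatives are taken in the sense of distributions on $\Omega$. *)

theory Defs
  imports "HOL-Analysis.Analysis"
begin

fun Ck :: "nat \<Rightarrow> ('a::real_normed_vector \<Rightarrow> real) \<Rightarrow> bool" where
  "Ck 0 f = continuous_on UNIV f"
| "Ck (Suc k) f = (continuous_on UNIV f \<and> (\<forall>z. f differentiable (at z)) \<and>
      (\<forall>v. Ck k (\<lambda>z. frechet_derivative f (at z) v)))"

definition smooth_fun :: "('a::real_normed_vector \<Rightarrow> real) \<Rightarrow> bool" where
  "smooth_fun f \<longleftrightarrow> (\<forall>k. Ck k f)"

definition test_fun :: "'a::real_normed_vector set \<Rightarrow> ('a \<Rightarrow> real) \<Rightarrow> bool" where
  "test_fun S \<phi> \<longleftrightarrow> smooth_fun \<phi> \<and> compact (closure {z. \<phi> z \<noteq> 0})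
      \<and> closure {z. \<phi> z \<noteq> 0} \<subseteq> S"

definition pdx :: "(real \<times> real \<Rightarrow> real) \<Rightarrow> real \<times> real \<Rightarrow> real" where
  "pdx \<phi> z = frechet_derivative \<phi> (at z) (1, 0)"
definition pdy :: "(real \<times> real \<Rightarrow> real) \<Rightarrow> real \<times> real \<Rightarrow> real" where
  "pdy \<phi> z = frechet_derivative \<phi> (at z) (0, 1)"

definition L2_on :: "'a::euclidean_space set \<Rightarrow> ('a \<Rightarrow> real) set" where
  "L2_on S = {f. f \<in> borel_measurable (lebesgue_on S) \<and>
                 integrable (lebesgue_on S) (\<lambda>z. (f z)\<^sup>2)}"

definition L2norm :: "'a::euclidean_space set \<Rightarrow> ('a \<Rightarrow> real) \<Rightarrow> real" where
  "L2norm S f = sqrt (LINT z|lebesgue_on S. (f z)\<^sup>2)"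

definition transport_deriv ::
  "real \<Rightarrow> (real \<times> real) set \<Rightarrow> (real \<times> real \<Rightarrow> real) \<Rightarrow> (real \<times> real \<Rightarrow> real) \<Rightarrow> bool" where
  "transport_deriv lam \<Omega> \<theta> g \<longleftrightarrow>
     (\<forall>\<phi>. test_fun \<Omega> \<phi> \<longrightarrow>
        (LINT z|lebesgue_on \<Omega>. g z * \<phi> z) =
        - (LINT z|lebesgue_on \<Omega>. \<theta> z * (pdy \<phi> z + lam * pdx \<phi> z)))"

definition X1 :: "real \<Rightarrow> (real \<times> real) set \<Rightarrow> (real \<times> real \<Rightarrow> real) set" where
  "X1 lam \<Omega> = {\<theta>. \<theta> \<in> L2_on \<Omega> \<and> (\<exists>g \<in> L2_on \<Omega>. transport_deriv lam \<Omega> \<theta> g)}"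

definition X1norm :: "real \<Rightarrow> (real \<times> real) set \<Rightarrow> (real \<times> real \<Rightarrow> real) \<Rightarrow> real" where
  "X1norm lam \<Omega> \<theta> =
     sqrt ((L2norm \<Omega> \<theta>)\<^sup>2 +
           (L2norm \<Omega> (SOME g. g \<in> L2_on \<Omega> \<and> transport_deriv lam \<Omega> \<theta> g))\<^sup>2)"

definition H1norm :: "real \<Rightarrow> real \<Rightarrow> (real \<Rightarrow> real) \<Rightarrow> real" where
  "H1norm a b \<phi> = sqrt ((LINT t|lebesgue_on {a<..<b}. (\<phi> t)\<^sup>2) +
                         (LINT t|lebesgue_on {a<..<b}. (deriv \<phi> t)\<^sup>2))"

text \<open>An element of H^{-1}(a,b) = (H^1_0(a,b))', represented by its action on the dense
  subspace C_c^infinity(a,b): a linear functional bounded w.r.t. the H^1 norm.\<close>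
definition in_Hm1 :: "real \<Rightarrow> real \<Rightarrow> ((real \<Rightarrow> real) \<Rightarrow> real) \<Rightarrow> bool" where
  "in_Hm1 a b F \<longleftrightarrow>
     (\<forall>\<phi> \<psi> \<alpha> \<beta>. test_fun {a<..<b} \<phi> \<longrightarrow> test_fun {a<..<b} \<psi> \<longrightarrow>
        F (\<lambda>t. \<alpha> * \<phi> t + \<beta> * \<psi> t) = \<alpha> * F \<phi> + \<beta> * F \<psi>) \<and>
     (\<exists>C. \<forall>\<phi>. test_fun {a<..<b} \<phi> \<longrightarrow> \<bar>F \<phi>\<bar> \<le> C * H1norm a b \<phi>)"

text \<open>T is a trace operator from X_1(Omega) into H^{-1}(a,b): linear, continuous, and
  coinciding with the pointwise boundary restriction r for C^1 functions.\<close>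
definition is_trace_op ::
  "real \<Rightarrow> (real \<times> real) set \<Rightarrow> real \<Rightarrow> real \<Rightarrow>
   ((real \<times> real \<Rightarrow> real) \<Rightarrow> real \<Rightarrow> real) \<Rightarrow>
   ((real \<times> real \<Rightarrow> real) \<Rightarrow> (real \<Rightarrow> real) \<Rightarrow> real) \<Rightarrow> bool" where
  "is_trace_op lam \<Omega> a b r T \<longleftrightarrow>
     (\<forall>\<theta> \<in> X1 lam \<Omega>. in_Hm1 a b (T \<theta>)) \<and>
     (\<forall>\<theta> \<in> X1 lam \<Omega>. \<forall>\<eta> \<in> X1 lam \<Omega>. \<forall>\<alpha> \<beta> \<phi>. test_fun {a<..<b} \<phi> \<longrightarrow>
        T (\<lambda>z. \<alpha> * \<theta> z + \<beta> * \<eta> z) \<phi> = \<alpha> * T \<theta> \<phi> + \<beta> * T \<eta> \<phi>) \<and>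
     (\<exists>C. \<forall>\<theta> \<in> X1 lam \<Omega>. \<forall>\<phi>. test_fun {a<..<b} \<phi> \<longrightarrow>
        \<bar>T \<theta> \<phi>\<bar> \<le> C * X1norm lam \<Omega> \<theta> * H1norm a b \<phi>) \<and>
     (\<forall>\<theta>. Ck 1 \<theta> \<longrightarrow> (\<forall>\<phi>. test_fun {a<..<b} \<phi> \<longrightarrow>
        T \<theta> \<phi> = (LINT t|lebesgue_on {a<..<b}. r \<theta> t * \<phi> t)))"

end

theory Submission
  imports Defs "HOL-Computational_Algebra.Polynomial"
begin

text \<open>For smooth \<open>\<theta>\<close>, Green's formula for \<open>\<partial>\<^sub>y + \<lambda> \<partial>\<^sub>x\<close> against \<open>\<phi>(y) \<chi>(x)\<close>, with
  \<open>\<chi> = 1\<close> near \<open>x = 0\<close> and \<open>\<chi> = 0\<close> near \<open>x = L1\<close>, expresses \<open>\<lambda> \<integral> \<theta>(0, y) \<phi>(y) dy\<close> through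
  \<open>\<theta>\<close> and \<open>\<theta>\<^sub>y + \<lambda> \<theta>\<^sub>x\<close> in \<open>L\<^sup>2(\<Omega>)\<close>; by Cauchy-Schwarz the result is bounded by
  \<open>\<parallel>\<theta>\<parallel>\<^sub>X\<^sub>1 \<parallel>\<phi>\<parallel>\<^sub>H\<^sub>1\<close>, which defines the trace on all of \<open>X\<^sub>1\<close>.
  The formula is justified by approximation: \<open>\<phi>(y) \<chi>(x) \<eta>\<^sub>n(x)\<close>, with \<open>\<eta>\<^sub>n\<close> a smooth step
  from \<open>0\<close> to \<open>1\<close> on \<open>[1/n, 2/n]\<close>, is a genuine test function, and the term of its transport
  derivative that falls on \<open>\<eta>\<^sub>n\<close> is \<open>\<lambda> \<integral>\<integral> \<theta>(x, y) \<phi>(y) \<eta>\<^sub>n'(x)\<close>, an average of \<open>\<theta>\<close> over the strip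
  \<open>1/n < x < 2/n\<close>. For \<open>\<theta> \<in> X\<^sub>1\<close> these averages converge to the Green expression (dominated
  convergence), for continuous \<open>\<theta>\<close> to \<open>\<integral> \<theta>(0, y) \<phi>(y) dy\<close>; defining the trace as their limit
  makes it independent of all choices and linear. All four edges are treated at once in
  coordinates adapted to an edge.\<close>

section \<open>Functions of class \<open>C\<^sup>k\<close>\<close>

lemma Ck_imp_continuous_on: "Ck k f \<Longrightarrow> continuous_on UNIV f"
  by (cases k) auto

lemma Ck_Suc_imp_Ck: "Ck (Suc k) f \<Longrightarrow> Ck k f"
  by (induction k arbitrary: f) auto

lemma Ck_imp_has_derivative:
  "Ck (Suc k) f \<Longrightarrow> (f has_derivative frechet_derivative f (at z)) (at z)"
  using frechet_derivative_works by auto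

lemma frechet_derivative_eq:
  "(f has_derivative f') (at z) \<Longrightarrow> frechet_derivative f (at z) v = f' v"
  by (metis frechet_derivative_at)

lemma Ck_const: "Ck k (\<lambda>z. c)"
  by (induction k arbitrary: c) auto

lemma Ck_add: "Ck k f \<Longrightarrow> Ck k g \<Longrightarrow> Ck k (\<lambda>z. f z + g z)"
proof (induction k arbitrary: f g)
  case (Suc k)
  note D = has_derivative_add[OF Ck_imp_has_derivative[OF Suc.prems(1)]
                                  Ck_imp_has_derivative[OF Suc.prems(2)]]
  show ?case
    using Suc by (auto simp: frechet_derivative_eq[OF D] intro!: continuous_intros differentiableI[OF D])
qed (auto intro: continuous_intros)

lemma Ck_cmult: "Ck k f \<Longrightarrow> Ck k (\<lambda>z. c * f z)"
proof (induction k arbitrary: f)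
  case (Suc k)
  note D = has_derivative_mult_right[OF Ck_imp_has_derivative[OF Suc.prems], of c]
  show ?case
    using Suc by (auto simp: frechet_derivative_eq[OF D] intro!: continuous_intros differentiableI[OF D])
qed (auto intro: continuous_intros)

lemma Ck_mult: "Ck k f \<Longrightarrow> Ck k g \<Longrightarrow> Ck k (\<lambda>z. f z * g z)"
proof (induction k arbitrary: f g)
  case (Suc k)
  note D = has_derivative_mult[OF Ck_imp_has_derivative[OF Suc.prems(1)]
                                  Ck_imp_has_derivative[OF Suc.prems(2)]]
  have "Ck k (\<lambda>z. f z * frechet_derivative g (at z) v + frechet_derivative f (at z) v * g z)" for v
    using Suc Ck_Suc_imp_Ck by (intro Ck_add Suc.IH) auto
  then show ?case
    using Suc.prems by (auto simp: frechet_derivative_eq[OF D] intro!: continuous_intros differentiableI[OF D])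
qed (auto intro: continuous_intros)

lemma Ck_inverse: "Ck k g \<Longrightarrow> (\<And>z. g z \<noteq> 0) \<Longrightarrow> Ck k (\<lambda>z. inverse (g z))"
proof (induction k arbitrary: g)
  case 0
  then show ?case by (auto intro!: continuous_intros)
next
  case (Suc k)
  note D = Deriv.has_derivative_inverse[OF Suc.prems(2) Ck_imp_has_derivative[OF Suc.prems(1)]]
  have inv: "Ck k (\<lambda>z. inverse (g z))"
    using Suc Ck_Suc_imp_Ck by blast
  have "Ck k (\<lambda>z. - (inverse (g z) * frechet_derivative g (at z) v * inverse (g z)))" for v
  proof -
    have "Ck k (\<lambda>z. frechet_derivative g (at z) v)"
      using Suc.prems(1) by simp
    then show ?thesis
      using Ck_cmult[OF Ck_mult[OF Ck_mult[OF inv] inv], of _ "-1"] by simp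
  qed
  then show ?case
    using Ck_imp_continuous_on[OF inv]
    by (auto simp: frechet_derivative_eq[OF D] intro!: differentiableI[OF D])
qed

lemma Ck_bounded_linear: "bounded_linear L \<Longrightarrow> Ck k (L :: 'a::real_normed_vector \<Rightarrow> real)"
proof (induction k)
  case (Suc k)
  note D = bounded_linear_imp_has_derivative[OF Suc.prems]
  show ?case
    using Suc by (auto simp: frechet_derivative_eq[OF D] linear_continuous_on Ck_const intro: differentiableI[OF D])
qed (simp add: linear_continuous_on)

lemma Ck_compose: "Ck k (f :: real \<Rightarrow> real) \<Longrightarrow> Ck k g \<Longrightarrow> Ck k (\<lambda>z. f (g z))"
proof (induction k arbitrary: f g)
  case 0
  then show ?case using continuous_on_compose2[of UNIV f UNIV g] by auto
next
  case (Suc k)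
  note Df = Ck_imp_has_derivative[OF Suc.prems(1)]
  have scale: "frechet_derivative f (at w) x = x * frechet_derivative f (at w) 1" for w x
    using linear_cmul[OF linear_frechet_derivative[OF differentiableI[OF Df[of w]]], of x 1] by simp
  have D: "((\<lambda>z. f (g z)) has_derivative
      (\<lambda>v. frechet_derivative g (at z) v * frechet_derivative f (at (g z)) 1)) (at z)" for z
  proof -
    have "(\<lambda>v. frechet_derivative f (at (g z)) (frechet_derivative g (at z) v))
        = (\<lambda>v. frechet_derivative g (at z) v * frechet_derivative f (at (g z)) 1)"
      by (rule ext) (rule scale)
    then show ?thesis
      using diff_chain_at[OF Ck_imp_has_derivative[OF Suc.prems(2), of z] Df[of "g z"]]
      by (simp add: o_def)
  qed
  have "Ck k (\<lambda>z. frechet_derivative g (at z) v * frechet_derivative f (at (g z)) 1)" for v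
  proof (rule Ck_mult)
    show "Ck k (\<lambda>z. frechet_derivative g (at z) v)"
      using Suc.prems(2) by simp
    show "Ck k (\<lambda>z. frechet_derivative f (at (g z)) 1)"
      using Suc.IH[of "\<lambda>w. frechet_derivative f (at w) 1" g] Ck_Suc_imp_Ck[OF Suc.prems(2)] Suc.prems(1)
      by simp
  qed
  moreover have "continuous_on UNIV (\<lambda>z. f (g z))"
    using continuous_on_compose2[of UNIV f UNIV g] Ck_imp_continuous_on[OF Suc.prems(1)]
      Ck_imp_continuous_on[OF Suc.prems(2)] by simp
  ultimately show ?case
    by (simp add: frechet_derivative_eq[OF D] differentiableI[OF D])
qed

lemma Ck_Suc_if_real_derivative:
  assumes "\<And>x. ((f :: real \<Rightarrow> real) has_real_derivative f' x) (at x)" and "Ck k f'"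
  shows "Ck (Suc k) f"
proof -
  have D: "(f has_derivative (\<lambda>v. f' z * v)) (at z)" for z
    using assms(1) by (simp add: has_field_derivative_def)
  have "continuous_on UNIV f"
    using assms(1) by (meson DERIV_isCont continuous_at_imp_continuous_on)
  moreover have "Ck k (\<lambda>z. v * f' z)" for v
    using Ck_cmult[OF assms(2)] .
  ultimately show ?thesis
    by (auto simp: frechet_derivative_eq[OF D] mult.commute intro!: differentiableI[OF D])
qed

lemma Ck_Suc_deriv:
  assumes "Ck (Suc k) (f :: real \<Rightarrow> real)"
  shows "(f has_real_derivative deriv f x) (at x)" and "Ck k (deriv f)"
proof -
  show D: "(f has_real_derivative deriv f x) (at x)" for x
    using assms DERIV_deriv_iff_real_differentiable by (metis Ck.simps(2))
  have "deriv f x = frechet_derivative f (at x) 1" for x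
    using frechet_derivative_eq[of f "\<lambda>v. deriv f x * v" x 1] D[of x]
    by (simp add: has_field_derivative_def)
  then have "deriv f = (\<lambda>x. frechet_derivative f (at x) 1)"
    by auto
  then show "Ck k (deriv f)"
    using assms by simp
qed

section \<open>A smooth step function\<close>

text \<open>All derivatives of \<open>exp (- 1/t)\<close> are of this form, so smoothness follows by induction.\<close>

definition flat_poly_exp :: "real poly \<Rightarrow> real \<Rightarrow> real" where
  "flat_poly_exp p t = (if t > 0 then poly p (1/t) * exp (- (1/t)) else 0)"

lemma poly_times_exp_minus_tendsto_0: "((\<lambda>s. poly p s * exp (- s)) \<longlongrightarrow> (0::real)) at_top"
proof -
  have "((\<lambda>s. \<Sum>i\<le>degree p. coeff p i * (s ^ i / exp s)) \<longlongrightarrow> (\<Sum>i\<le>degree p. coeff p i * 0)) at_top"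
    by (intro tendsto_sum tendsto_mult tendsto_const tendsto_power_div_exp_0)
  then show ?thesis
    by (simp add: poly_altdef sum_distrib_right exp_minus divide_inverse mult.assoc)
qed

lemma flat_poly_exp_tendsto_0: "(flat_poly_exp p \<longlongrightarrow> 0) (at_right 0)"
proof -
  have lim: "((\<lambda>t. poly p (inverse t) * exp (- inverse t)) \<longlongrightarrow> 0) (at_right 0)"
    using filterlim_compose[OF poly_times_exp_minus_tendsto_0 filterlim_inverse_at_top_right] .
  have "eventually (\<lambda>t. poly p (inverse t) * exp (- inverse t) = flat_poly_exp p t) (at_right 0)"
    by (rule eventually_mono[OF eventually_at_right_less]) (simp add: flat_poly_exp_def divide_inverse)
  from tendsto_cong[OF this] lim show ?thesis
    by simp
qed

lemma has_real_derivative_flat_poly_exp: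
  "(flat_poly_exp p has_real_derivative flat_poly_exp ([:0, 0, 1:] * (p - pderiv p)) t) (at t)"
proof (cases t "0 :: real" rule: linorder_cases)
  case less
  have "(flat_poly_exp p has_real_derivative 0) (at t)"
    by (rule has_field_derivative_transform_within_open[OF DERIV_const, where S = "{..<0}"])
      (use less in \<open>auto simp: flat_poly_exp_def\<close>)
  then show ?thesis
    using less by (simp add: flat_poly_exp_def)
next
  case greater
  have "((\<lambda>t. poly p (1/t) * exp (- (1/t))) has_real_derivative
      poly (pderiv p) (1/t) * (- inverse (t*t)) * exp (- (1/t))
        + poly p (1/t) * (exp (- (1/t)) * inverse (t*t))) (at t)"
    using greater by (auto intro!: derivative_eq_intros DERIV_chain2[OF poly_DERIV] simp: divide_inverse)
  moreover have "poly (pderiv p) (1/t) * (- inverse (t*t)) * exp (- (1/t))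
        + poly p (1/t) * (exp (- (1/t)) * inverse (t*t))
      = flat_poly_exp ([:0, 0, 1:] * (p - pderiv p)) t"
    using greater by (simp add: flat_poly_exp_def algebra_simps divide_inverse power2_eq_square)
  ultimately have "((\<lambda>t. poly p (1/t) * exp (- (1/t))) has_real_derivative
      flat_poly_exp ([:0, 0, 1:] * (p - pderiv p)) t) (at t)"
    by simp
  then show ?thesis
    by (rule has_field_derivative_transform_within_open[where S = "{0<..}"])
      (use greater in \<open>auto simp: flat_poly_exp_def\<close>)
next
  case equal
  have "((\<lambda>s. (flat_poly_exp p s - flat_poly_exp p 0) / (s - 0)) \<longlongrightarrow> 0) (at 0)"
  proof (rule filterlim_split_at)
    show "((\<lambda>s. (flat_poly_exp p s - flat_poly_exp p 0) / (s - 0)) \<longlongrightarrow> 0) (at_left 0)"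
      by (rule tendsto_eventually, rule eventually_mono[OF eventually_at_left_real[of "-1"]])
        (auto simp: flat_poly_exp_def)
  next
    \<comment> \<open>the difference quotient at \<open>0\<close> is again a function of the same kind\<close>
    have "eventually (\<lambda>s. flat_poly_exp ([:0, 1:] * p) s
        = (flat_poly_exp p s - flat_poly_exp p 0) / (s - 0)) (at_right 0)"
      by (auto simp: flat_poly_exp_def intro!: eventually_mono[OF eventually_at_right_less[of 0]])
    from tendsto_cong[OF this] flat_poly_exp_tendsto_0[of "[:0, 1:] * p"]
    show "((\<lambda>s. (flat_poly_exp p s - flat_poly_exp p 0) / (s - 0)) \<longlongrightarrow> 0) (at_right 0)"
      by simp
  qed
  then show ?thesis
    using equal by (simp add: has_field_derivative_iff flat_poly_exp_def)
qed

lemma Ck_flat_poly_exp: "Ck k (flat_poly_exp p)"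
proof (induction k arbitrary: p)
  case 0
  show ?case
    using has_real_derivative_flat_poly_exp
    by (meson Ck.simps(1) DERIV_isCont continuous_at_imp_continuous_on)
next
  case (Suc k)
  show ?case
    by (rule Ck_Suc_if_real_derivative[OF has_real_derivative_flat_poly_exp Suc.IH])
qed

lemma flat_poly_exp_1: "flat_poly_exp 1 t = (if t > 0 then exp (- (1/t)) else 0)"
  by (simp add: flat_poly_exp_def)

definition smooth_step :: "real \<Rightarrow> real" where
  "smooth_step t = flat_poly_exp 1 t / (flat_poly_exp 1 t + flat_poly_exp 1 (1 - t))"

lemma smooth_step_denominator_pos: "flat_poly_exp 1 t + flat_poly_exp 1 (1 - t) > 0"
  by (cases "t > 0") (auto simp: flat_poly_exp_1 add_pos_nonneg)

lemma Ck_smooth_step: "Ck k smooth_step"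
proof -
  have "Ck k (\<lambda>t. flat_poly_exp 1 (1 + (-1) * t))"
    by (intro Ck_compose[OF Ck_flat_poly_exp] Ck_add Ck_const Ck_cmult Ck_bounded_linear bounded_linear_ident)
  then have "Ck k (\<lambda>t. inverse (flat_poly_exp 1 t + flat_poly_exp 1 (1 - t)))"
    using smooth_step_denominator_pos
    by (intro Ck_inverse Ck_add Ck_flat_poly_exp) (auto simp: less_le)
  from Ck_mult[OF Ck_flat_poly_exp this] show ?thesis
    by (simp add: smooth_step_def[abs_def] divide_inverse)
qed

lemma smooth_step_eq_0: "t \<le> 0 \<Longrightarrow> smooth_step t = 0"
  by (simp add: smooth_step_def flat_poly_exp_1)

lemma smooth_step_eq_1: "t \<ge> 1 \<Longrightarrow> smooth_step t = 1"
  by (simp add: smooth_step_def flat_poly_exp_1)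

lemma smooth_step_bounds: "0 \<le> smooth_step t" "smooth_step t \<le> 1"
  using smooth_step_denominator_pos[of t]
  by (auto simp: smooth_step_def flat_poly_exp_1 divide_simps)

lemma smooth_step_mono: "mono smooth_step"
proof
  fix s t :: real
  assume "s \<le> t"
  then have "flat_poly_exp 1 s * flat_poly_exp 1 (1 - t) \<le> flat_poly_exp 1 t * flat_poly_exp 1 (1 - s)"
    by (intro mult_mono) (auto simp: flat_poly_exp_1 divide_simps)
  then show "smooth_step s \<le> smooth_step t"
    using smooth_step_denominator_pos[of s] smooth_step_denominator_pos[of t]
    by (simp add: smooth_step_def divide_simps algebra_simps)
qed

definition ramp :: "real \<Rightarrow> real \<Rightarrow> real \<Rightarrow> real" where
  "ramp a b t = smooth_step ((t - a) / (b - a))"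

lemma Ck_ramp: "Ck k (ramp a b)"
proof -
  have "Ck k (\<lambda>t. smooth_step ((- a / (b - a)) + (1 / (b - a)) * t))"
    by (intro Ck_compose[OF Ck_smooth_step] Ck_add Ck_const Ck_cmult Ck_bounded_linear bounded_linear_ident)
  then show ?thesis
    by (simp add: ramp_def[abs_def] diff_divide_distrib)
qed

lemma ramp_eq_0: "a < b \<Longrightarrow> t \<le> a \<Longrightarrow> ramp a b t = 0"
  by (simp add: ramp_def smooth_step_eq_0 divide_nonpos_pos)

lemma ramp_eq_1: "a < b \<Longrightarrow> b \<le> t \<Longrightarrow> ramp a b t = 1"
  by (simp add: ramp_def smooth_step_eq_1)

lemma ramp_bounds: "0 \<le> ramp a b t" "ramp a b t \<le> 1"
  by (simp_all add: ramp_def smooth_step_bounds)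

lemma has_real_derivative_ramp: "(ramp a b has_real_derivative deriv (ramp a b) t) (at t)"
  using Ck_ramp[of "Suc 0"] by (rule Ck_Suc_deriv)

lemma Ck_deriv_ramp: "Ck k (deriv (ramp a b))"
  using Ck_ramp[of "Suc k"] by (rule Ck_Suc_deriv)

lemma deriv_ramp_nonneg:
  assumes "a < b"
  shows "deriv (ramp a b) t \<ge> 0"
proof (rule mono_on_imp_deriv_nonneg[OF _ has_real_derivative_ramp])
  show "mono_on UNIV (ramp a b)"
    using assms smooth_step_mono
    by (auto intro!: mono_onI simp: ramp_def monoD divide_right_mono)
qed auto

lemma deriv_ramp_eq_0:
  assumes "a < b" and "t < a \<or> b < t"
  shows "deriv (ramp a b) t = 0"
proof -
  obtain S c where S: "open S" "t \<in> S" and const: "\<And>s. s \<in> S \<Longrightarrow> c = ramp a b s"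
  proof (cases "t < a")
    case True
    show ?thesis
      by (rule that[of "{..<a}" 0]) (use True assms(1) in \<open>auto simp: ramp_eq_0\<close>)
  next
    case False
    show ?thesis
      by (rule that[of "{b<..}" 1]) (use False assms in \<open>auto simp: ramp_eq_1\<close>)
  qed
  have "(ramp a b has_real_derivative 0) (at t)"
    by (rule has_field_derivative_transform_within_open[OF DERIV_const S const])
  then show ?thesis
    using has_real_derivative_ramp DERIV_unique by blast
qed

section \<open>Integration\<close>

lemma borel_measurable_continuous_lebesgue_on:
  "continuous_on UNIV f \<Longrightarrow> S \<in> sets lebesgue \<Longrightarrow> f \<in> borel_measurable (lebesgue_on S)"
  by (rule continuous_imp_measurable_on_sets_lebesgue) (auto intro: continuous_on_subset)

lemma integrable_continuous_on_bounded_set: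
  fixes f :: "'a::euclidean_space \<Rightarrow> real"
  assumes f: "continuous_on UNIV f" and S: "bounded S" "S \<in> sets lebesgue"
  shows "integrable (lebesgue_on S) f"
proof -
  interpret finite_measure "lebesgue_on S"
    using S by (intro finite_measure_lebesgue_on bounded_set_imp_lmeasurable)
  have "compact (f ` closure S)"
    using S(1) f by (intro compact_continuous_image) (auto intro: continuous_on_subset compact_closure)
  then obtain M where "\<And>x. x \<in> S \<Longrightarrow> norm (f x) \<le> M"
    using closure_subset compact_imp_bounded by (fastforce simp: bounded_iff)
  then have "AE x in lebesgue_on S. norm (f x) \<le> norm M"
    by (intro AE_I2) (auto simp: space_restrict_space intro: order_trans[OF _ abs_ge_self])
  then show ?thesis
    by (rule Bochner_Integration.integrable_bound[OF integrable_const
          borel_measurable_continuous_lebesgue_on[OF f S(2)]])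
qed

lemma nonneg_quadratic_imp_discriminant:
  fixes A B C :: real
  assumes nonneg: "\<And>t. 0 \<le> A * t\<^sup>2 + 2 * B * t + C" and "0 \<le> A"
  shows "B\<^sup>2 \<le> A * C"
proof (cases "A = 0")
  case True
  have "B = 0"
  proof (rule ccontr)
    assume "B \<noteq> 0"
    have "0 \<le> A * (- (C + 1) / (2 * B))\<^sup>2 + 2 * B * (- (C + 1) / (2 * B)) + C"
      by (rule nonneg)
    also have "\<dots> = -1"
      using True \<open>B \<noteq> 0\<close> by (simp add: field_simps)
    finally show False
      by simp
  qed
  with True show ?thesis
    by simp
next
  case False
  with \<open>0 \<le> A\<close> have "A > 0"
    by simp
  have "0 \<le> A * (- B / A)\<^sup>2 + 2 * B * (- B / A) + C"
    by (rule nonneg)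
  also have "\<dots> = C - B\<^sup>2 / A"
    using \<open>A > 0\<close> by (simp add: field_simps power2_eq_square)
  finally show ?thesis
    using \<open>A > 0\<close> by (simp add: divide_le_eq mult.commute)
qed

lemma integrable_mult_of_square_integrable:
  fixes f h :: "'a \<Rightarrow> real"
  assumes "integrable M (\<lambda>x. (f x)\<^sup>2)" "integrable M (\<lambda>x. (h x)\<^sup>2)"
    and "f \<in> borel_measurable M" "h \<in> borel_measurable M"
  shows "integrable M (\<lambda>x. f x * h x)"
proof (rule Bochner_Integration.integrable_bound)
  show "integrable M (\<lambda>x. (f x)\<^sup>2 + (h x)\<^sup>2)"
    using assms by simp
  have "\<bar>f x\<bar> * \<bar>h x\<bar> \<le> (f x)\<^sup>2 + (h x)\<^sup>2" for x
  proof -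
    have "0 \<le> \<bar>f x\<bar> * \<bar>h x\<bar>"
      by simp
    moreover have "2 * \<bar>f x\<bar> * \<bar>h x\<bar> \<le> (f x)\<^sup>2 + (h x)\<^sup>2"
      using sum_squares_bound[of "\<bar>f x\<bar>" "\<bar>h x\<bar>"] by simp
    ultimately show ?thesis
      by linarith
  qed
  then show "AE x in M. norm (f x * h x) \<le> norm ((f x)\<^sup>2 + (h x)\<^sup>2)"
    by (simp add: abs_mult)
qed (use assms in simp)

lemma Cauchy_Schwarz_integral:
  fixes f h :: "'a \<Rightarrow> real"
  assumes f2: "integrable M (\<lambda>x. (f x)\<^sup>2)" and h2: "integrable M (\<lambda>x. (h x)\<^sup>2)"
    and "f \<in> borel_measurable M" "h \<in> borel_measurable M"
  shows "\<bar>LINT x|M. f x * h x\<bar> \<le> sqrt (LINT x|M. (f x)\<^sup>2) * sqrt (LINT x|M. (h x)\<^sup>2)"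
proof -
  note fh = integrable_mult_of_square_integrable[OF assms]
  let ?A = "LINT x|M. (f x)\<^sup>2" and ?B = "LINT x|M. f x * h x" and ?C = "LINT x|M. (h x)\<^sup>2"
  have "0 \<le> ?A * t\<^sup>2 + 2 * ?B * t + ?C" for t
  proof -
    have "0 \<le> (LINT x|M. (t * f x + h x)\<^sup>2)"
      by (rule integral_nonneg_AE) simp
    also have "\<dots> = (LINT x|M. t\<^sup>2 * (f x)\<^sup>2 + (2 * t) * (f x * h x) + (h x)\<^sup>2)"
      by (rule Bochner_Integration.integral_cong) (auto simp: power2_eq_square algebra_simps)
    also have "\<dots> = t\<^sup>2 * ?A + (2 * t) * ?B + ?C"
      using f2 h2 fh by simp
    finally show ?thesis
      by (simp add: algebra_simps)
  qed
  moreover have "0 \<le> ?A"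
    by (rule integral_nonneg_AE) simp
  ultimately have "sqrt (?B\<^sup>2) \<le> sqrt (?A * ?C)"
    by (intro real_sqrt_le_mono nonneg_quadratic_imp_discriminant)
  then show ?thesis
    by (simp add: real_sqrt_mult)
qed

lemma lebesgue_integral_Ioo_eq_integral_Icc:
  fixes F :: "real \<Rightarrow> real"
  assumes "continuous_on UNIV F"
  shows "(LINT x|lebesgue_on {a<..<b}. F x) = integral {a..b} F"
proof -
  have "(LINT x|lebesgue_on {a<..<b}. F x) = integral {a<..<b} F"
    using assms by (intro lebesgue_integral_eq_integral integrable_continuous_on_bounded_set) auto
  then show ?thesis
    by (simp add: integral_open_interval_real)
qed

lemma lebesgue_integral_Ioo_reflect:
  fixes F :: "real \<Rightarrow> real"
  assumes "continuous_on UNIV F"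
  shows "(LINT x|lebesgue_on {0<..<L}. F (L - x)) = (LINT x|lebesgue_on {0<..<L}. F x)"
proof -
  have "continuous_on UNIV (\<lambda>x. F (L - x))"
    using assms by (intro continuous_on_compose2[OF assms]) (auto intro: continuous_intros)
  moreover have "integral {0..L} (\<lambda>x. F (L - x)) = integral {- L..0} (\<lambda>x. F (L + x))"
    using Henstock_Kurzweil_Integration.integral_reflect_real[of 0 "- L" "\<lambda>x. F (L + x)"]
    by (simp only: minus_minus minus_zero diff_conv_add_uminus)
  moreover have "\<dots> = integral {0..L} F"
    using integral_shift_Icc_real[of "- L" 0 F L] by (simp add: o_def)
  ultimately show ?thesis
    using assms by (simp add: lebesgue_integral_Ioo_eq_integral_Icc)
qed

lemma lebesgue_integral_rectangle_product:
  fixes F G :: "real \<Rightarrow> real"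
  assumes F: "continuous_on UNIV F" and G: "continuous_on UNIV G"
  shows "(LINT z|lebesgue_on ({a<..<b} \<times> {c<..<d}). F (fst z) * G (snd z))
     = (LINT x|lebesgue_on {a<..<b}. F x) * (LINT y|lebesgue_on {c<..<d}. G y)"
proof -
  let ?h = "\<lambda>z. F (fst z) * G (snd z)"
  have h: "continuous_on UNIV ?h"
    by (intro continuous_intros continuous_on_compose2[OF F] continuous_on_compose2[OF G]) auto
  have box: "{a<..<b} \<times> {c<..<d} = box (a, c) (b, d)"
    by (auto simp: mem_box Basis_prod_def)
  have "(LINT z|lebesgue_on ({a<..<b} \<times> {c<..<d}). ?h z) = integral (box (a, c) (b, d)) ?h"
    unfolding box using h by (intro lebesgue_integral_eq_integral integrable_continuous_on_bounded_set) auto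
  also have "\<dots> = integral (cbox a b) (\<lambda>x. integral (cbox c d) (\<lambda>y. ?h (x, y)))"
    using h by (simp add: integral_open_interval integral_prod_continuous continuous_on_subset)
  also have "\<dots> = integral {a..b} F * integral {c..d} G"
    by simp
  finally show ?thesis
    using F G by (simp add: lebesgue_integral_Ioo_eq_integral_Icc)
qed

lemma lebesgue_integral_deriv_ramp:
  assumes "0 \<le> a" "a < b" "b \<le> L"
  shows "(LINT t|lebesgue_on {0<..<L}. deriv (ramp a b) t) = 1"
proof -
  have "(deriv (ramp a b) has_integral (ramp a b L - ramp a b 0)) {0..L}"
    using assms has_real_derivative_ramp
    by (intro fundamental_theorem_of_calculus)
      (auto simp: has_real_derivative_iff_has_vector_derivative has_vector_derivative_at_within)
  moreover have "ramp a b L - ramp a b 0 = 1"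
    using assms by (simp add: ramp_eq_0 ramp_eq_1)
  ultimately show ?thesis
    using Ck_deriv_ramp[of 0] by (simp add: lebesgue_integral_Ioo_eq_integral_Icc integral_unique)
qed

lemma L2norm_nonneg: "L2norm S f \<ge> 0"
  unfolding L2norm_def by (intro real_sqrt_ge_zero integral_nonneg_AE) simp

lemma H1norm_nonneg: "H1norm a b \<phi> \<ge> 0"
  unfolding H1norm_def by (intro real_sqrt_ge_zero add_nonneg_nonneg integral_nonneg_AE) simp_all

lemma L2_le_H1norm:
  shows "sqrt (LINT t|lebesgue_on {a<..<b}. (\<phi> t)\<^sup>2) \<le> H1norm a b \<phi>"
    and "sqrt (LINT t|lebesgue_on {a<..<b}. (deriv \<phi> t)\<^sup>2) \<le> H1norm a b \<phi>"
  unfolding H1norm_def by (intro real_sqrt_le_mono integral_nonneg_AE; simp)+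

lemma L2norm_le_X1norm:
  shows "L2norm \<Omega> \<theta> \<le> X1norm lam \<Omega> \<theta>"
    and "L2norm \<Omega> (SOME g. g \<in> L2_on \<Omega> \<and> transport_deriv lam \<Omega> \<theta> g) \<le> X1norm lam \<Omega> \<theta>"
  unfolding X1norm_def by (simp_all add: real_le_rsqrt)

lemma L2_on_integrable_mult_continuous:
  assumes f: "f \<in> L2_on S" and b: "continuous_on UNIV b" and S: "bounded S" "S \<in> sets lebesgue"
  shows "integrable (lebesgue_on S) (\<lambda>z. f z * b z)"
proof (rule integrable_mult_of_square_integrable)
  show "integrable (lebesgue_on S) (\<lambda>z. (b z)\<^sup>2)"
    using b S by (intro integrable_continuous_on_bounded_set continuous_intros)
  show "b \<in> borel_measurable (lebesgue_on S)"
    using b S(2) by (rule borel_measurable_continuous_lebesgue_on)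
qed (use f in \<open>simp_all add: L2_on_def\<close>)

lemma L2_on_integral_mult_continuous_le:
  assumes f: "f \<in> L2_on S" and b: "continuous_on UNIV b" and S: "bounded S" "S \<in> sets lebesgue"
  shows "\<bar>LINT z|lebesgue_on S. f z * b z\<bar> \<le> L2norm S f * sqrt (LINT z|lebesgue_on S. (b z)\<^sup>2)"
  unfolding L2norm_def
proof (rule Cauchy_Schwarz_integral)
  show "integrable (lebesgue_on S) (\<lambda>z. (b z)\<^sup>2)"
    using b S by (intro integrable_continuous_on_bounded_set continuous_intros)
  show "b \<in> borel_measurable (lebesgue_on S)"
    using b S(2) by (rule borel_measurable_continuous_lebesgue_on)
qed (use f in \<open>simp_all add: L2_on_def\<close>)

lemma test_fun_real_deriv:
  assumes "test_fun S (\<phi> :: real \<Rightarrow> real)"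
  shows "(\<phi> has_real_derivative deriv \<phi> t) (at t)" and "continuous_on UNIV \<phi>"
    and "continuous_on UNIV (deriv \<phi>)"
proof -
  have Ck: "Ck k \<phi>" for k
    using assms by (simp add: test_fun_def smooth_fun_def)
  show "(\<phi> has_real_derivative deriv \<phi> t) (at t)"
    using Ck[of "Suc 0"] by (rule Ck_Suc_deriv)
  show "continuous_on UNIV \<phi>" "continuous_on UNIV (deriv \<phi>)"
    using Ck[of 0] Ck_Suc_deriv(2)[OF Ck[of "Suc 0"]] by simp_all
qed

section \<open>The trace along one edge\<close>

text \<open>One edge of the rectangle, in coordinates adapted to it: for \<open>z \<in> \<Omega>\<close>, \<open>offset + normal z\<close> is
  the distance from \<open>z\<close> to the edge, \<open>tangential z\<close> the position along it, and \<open>edge s\<close> the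
  boundary point at position \<open>s\<close>.\<close>

locale rectangle_edge =
  fixes lam :: real and \<Omega> :: "(real \<times> real) set"
    and normal tangential :: "real \<times> real \<Rightarrow> real" and offset Ln Lt :: real
    and edge :: "real \<Rightarrow> real \<times> real"
  assumes bounded_domain: "bounded \<Omega>" and sets_domain: "\<Omega> \<in> sets lebesgue"
    and normal: "bounded_linear normal" and tangential: "bounded_linear tangential"
    and Ln_pos: "Ln > 0"
    and domain_iff: "\<And>z. z \<in> \<Omega> \<longleftrightarrow> offset + normal z \<in> {0<..<Ln} \<and> tangential z \<in> {0<..<Lt}"
    and transversal: "normal (0, 1) + lam * normal (1, 0) \<noteq> 0"
    and fubini: "\<And>F G :: real \<Rightarrow> real. continuous_on UNIV F \<Longrightarrow> continuous_on UNIV G \<Longrightarrow>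
      (LINT z|lebesgue_on \<Omega>. F (offset + normal z) * G (tangential z))
        = (LINT x|lebesgue_on {0<..<Ln}. F x) * (LINT s|lebesgue_on {0<..<Lt}. G s)"
    and edge_continuous: "continuous_on UNIV edge"
    and dist_edge: "\<And>z. dist z (edge (tangential z)) = \<bar>offset + normal z\<bar>"
begin

definition depth :: "real \<times> real \<Rightarrow> real" where
  "depth z = offset + normal z"

definition far_cutoff :: "real \<Rightarrow> real" where
  "far_cutoff t = 1 - ramp (Ln / 3) (2 * Ln / 3) t"

definition near_cutoff :: "nat \<Rightarrow> real \<Rightarrow> real" where
  "near_cutoff n = ramp (1 / n) (2 / n)"

definition lift :: "nat \<Rightarrow> (real \<Rightarrow> real) \<Rightarrow> real \<times> real \<Rightarrow> real" where
  "lift n \<phi> z = \<phi> (tangential z) * (far_cutoff (depth z) * near_cutoff n (depth z))"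

definition tangential_rate :: real where
  "tangential_rate = tangential (0, 1) + lam * tangential (1, 0)"

definition normal_rate :: real where
  "normal_rate = normal (0, 1) + lam * normal (1, 0)"

lemma continuous_on_depth: "continuous_on UNIV depth"
  unfolding depth_def[abs_def] using normal by (intro continuous_intros linear_continuous_on)

lemma continuous_on_tangential: "continuous_on UNIV tangential"
  using tangential by (rule linear_continuous_on)

lemma Ck_depth: "Ck k depth"
  unfolding depth_def[abs_def] by (intro Ck_add Ck_const Ck_bounded_linear normal)

lemma has_derivative_depth: "(depth has_derivative normal) (at z)"
  unfolding depth_def[abs_def]
  using has_derivative_add[OF has_derivative_const bounded_linear_imp_has_derivative[OF normal]] by simp

lemma depth_pos: "z \<in> \<Omega> \<Longrightarrow> depth z > 0"
  using domain_iff by (simp add: depth_def)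

lemma Ck_far_cutoff: "Ck k far_cutoff"
  unfolding far_cutoff_def[abs_def] using Ck_add[OF Ck_const Ck_cmult[OF Ck_ramp, of _ "-1"]] by simp

lemma far_cutoff_eq_0: "t \<ge> 2 * Ln / 3 \<Longrightarrow> far_cutoff t = 0"
  using Ln_pos by (simp add: far_cutoff_def ramp_eq_1)

lemma far_cutoff_eq_1: "t \<le> Ln / 3 \<Longrightarrow> far_cutoff t = 1"
  using Ln_pos by (simp add: far_cutoff_def ramp_eq_0)

lemma has_real_derivative_far_cutoff: "(far_cutoff has_real_derivative deriv far_cutoff t) (at t)"
  using Ck_far_cutoff[of "Suc 0"] by (rule Ck_Suc_deriv)

lemma continuous_on_deriv_far_cutoff: "continuous_on UNIV (deriv far_cutoff)"
  using Ck_Suc_deriv(2)[OF Ck_far_cutoff[of "Suc 0"]] by simp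

lemma Ck_near_cutoff: "Ck k (near_cutoff n)"
  by (simp add: near_cutoff_def Ck_ramp)

lemma near_cutoff_eq_0: "n > 0 \<Longrightarrow> t \<le> 1 / n \<Longrightarrow> near_cutoff n t = 0"
  by (simp add: near_cutoff_def ramp_eq_0 divide_strict_right_mono)

lemma near_cutoff_eq_1: "n > 0 \<Longrightarrow> t \<ge> 2 / n \<Longrightarrow> near_cutoff n t = 1"
  by (simp add: near_cutoff_def ramp_eq_1 divide_strict_right_mono)

lemma has_real_derivative_near_cutoff:
  "(near_cutoff n has_real_derivative deriv (near_cutoff n) t) (at t)"
  by (simp add: near_cutoff_def has_real_derivative_ramp)

lemma continuous_on_deriv_near_cutoff: "continuous_on UNIV (deriv (near_cutoff n))"
  using Ck_deriv_ramp[of 0] by (simp add: near_cutoff_def)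

lemma deriv_near_cutoff_nonneg: "n > 0 \<Longrightarrow> deriv (near_cutoff n) t \<ge> 0"
  by (simp add: near_cutoff_def deriv_ramp_nonneg divide_strict_right_mono)

lemma deriv_near_cutoff_eq_0: "n > 0 \<Longrightarrow> t < 1 / n \<or> 2 / n < t \<Longrightarrow> deriv (near_cutoff n) t = 0"
  by (simp add: near_cutoff_def deriv_ramp_eq_0 divide_strict_right_mono)

lemma far_cutoff_mult_deriv_near_cutoff:
  assumes "n > 0" and "n \<ge> 6 / Ln"
  shows "far_cutoff t * deriv (near_cutoff n) t = deriv (near_cutoff n) t"
proof (cases "t \<le> 2 / n")
  case True
  moreover have "2 / n \<le> Ln / 3"
    using assms Ln_pos by (simp add: field_simps)
  ultimately show ?thesis
    by (simp add: far_cutoff_eq_1)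
qed (use assms deriv_near_cutoff_eq_0 in auto)

lemma Ck_lift: "(\<And>k. Ck k \<phi>) \<Longrightarrow> Ck k (lift n \<phi>)"
  unfolding lift_def[abs_def]
  by (intro Ck_mult Ck_compose[OF _ Ck_bounded_linear[OF tangential]]
      Ck_compose[OF Ck_far_cutoff Ck_depth] Ck_compose[OF Ck_near_cutoff Ck_depth])

lemma lift_nonzero_imp:
  assumes n: "n > 0" and "lift n \<phi> z \<noteq> 0"
  shows "tangential z \<in> closure {s. \<phi> s \<noteq> 0}" and "1 / n \<le> depth z" and "depth z \<le> 2 * Ln / 3"
proof -
  have "\<phi> (tangential z) \<noteq> 0" "far_cutoff (depth z) \<noteq> 0" "near_cutoff n (depth z) \<noteq> 0"
    using assms(2) by (auto simp: lift_def)
  then show "tangential z \<in> closure {s. \<phi> s \<noteq> 0}"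
    using subsetD[OF closure_subset, of "tangential z" "{s. \<phi> s \<noteq> 0}"] by simp
  have "\<not> depth z \<le> 1 / n" "\<not> depth z \<ge> 2 * Ln / 3"
    using \<open>near_cutoff n (depth z) \<noteq> 0\<close> \<open>far_cutoff (depth z) \<noteq> 0\<close> n near_cutoff_eq_0 far_cutoff_eq_0
    by blast+
  then show "1 / n \<le> depth z" "depth z \<le> 2 * Ln / 3"
    by linarith+
qed

lemma lift_test_fun:
  assumes n: "n > 0" and \<phi>: "test_fun {0<..<Lt} \<phi>"
  shows "test_fun \<Omega> (lift n \<phi>)"
proof -
  define C where "C = closure {s. \<phi> s \<noteq> 0}"
  define K where "K = tangential -` C \<inter> {z. 1 / n \<le> depth z \<and> depth z \<le> 2 * Ln / 3}"
  have C: "compact C" "C \<subseteq> {0<..<Lt}"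
    using \<phi> by (simp_all add: C_def test_fun_def)
  have "{z. lift n \<phi> z \<noteq> 0} \<subseteq> K"
    using lift_nonzero_imp[OF n] by (auto simp: K_def C_def)
  moreover have "closed K"
    unfolding K_def
    by (intro closed_Int closed_vimage continuous_on_tangential compact_imp_closed C(1)
        closed_Collect_conj closed_Collect_le continuous_on_depth continuous_on_const)
  ultimately have supp: "closure {z. lift n \<phi> z \<noteq> 0} \<subseteq> K"
    by (rule closure_minimal)
  have "K \<subseteq> \<Omega>"
  proof
    fix z
    assume z: "z \<in> K"
    have "0 < depth z"
      using z n by (auto simp: K_def intro: less_le_trans[of 0 "1 / real n"])
    moreover have "depth z < Ln"
      using z Ln_pos by (simp add: K_def)
    ultimately show "z \<in> \<Omega>"
      using z C(2) by (auto simp: K_def domain_iff depth_def)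
  qed
  then have "compact (closure {z. lift n \<phi> z \<noteq> 0})"
    using supp \<open>closed K\<close> bounded_domain
    by (meson bounded_closure bounded_subset compact_eq_bounded_closed closed_closure order_trans)
  moreover have "smooth_fun (lift n \<phi>)"
    using \<phi> Ck_lift by (simp add: test_fun_def smooth_fun_def)
  ultimately show ?thesis
    using supp \<open>K \<subseteq> \<Omega>\<close> by (simp add: test_fun_def)
qed

lemma transport_lift:
  assumes \<phi>: "\<And>s. (\<phi> has_real_derivative deriv \<phi> s) (at s)"
  shows "pdy (lift n \<phi>) z + lam * pdx (lift n \<phi>) z
    = tangential_rate * (deriv \<phi> (tangential z) * (far_cutoff (depth z) * near_cutoff n (depth z)))
      + normal_rate * (\<phi> (tangential z) * (deriv far_cutoff (depth z) * near_cutoff n (depth z)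
                                          + far_cutoff (depth z) * deriv (near_cutoff n) (depth z)))"
proof -
  have Dc: "((\<lambda>t. far_cutoff t * near_cutoff n t) has_real_derivative
      deriv far_cutoff t * near_cutoff n t + far_cutoff t * deriv (near_cutoff n) t) (at t)" for t
    using DERIV_mult[OF has_real_derivative_far_cutoff has_real_derivative_near_cutoff]
    by (simp add: algebra_simps)
  have D: "(lift n \<phi> has_derivative (\<lambda>v.
      deriv \<phi> (tangential z) * tangential v * (far_cutoff (depth z) * near_cutoff n (depth z))
      + \<phi> (tangential z) * ((deriv far_cutoff (depth z) * near_cutoff n (depth z)
          + far_cutoff (depth z) * deriv (near_cutoff n) (depth z)) * normal v))) (at z)"
    unfolding lift_def[abs_def]
    using has_derivative_mult[OF
        has_derivative_compose[OF bounded_linear_imp_has_derivative[OF tangential]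
          \<phi>[unfolded has_field_derivative_def]]
        has_derivative_compose[OF has_derivative_depth Dc[unfolded has_field_derivative_def]]]
    by (simp add: algebra_simps)
  show ?thesis
    unfolding pdx_def pdy_def frechet_derivative_eq[OF D] tangential_rate_def normal_rate_def
    by (simp add: algebra_simps)
qed

lemma continuous_on_along_edge:
  fixes \<phi> c :: "real \<Rightarrow> real"
  assumes "continuous_on UNIV \<phi>" and "continuous_on UNIV c"
  shows "continuous_on UNIV (\<lambda>z. \<phi> (tangential z) * c (depth z))"
  using continuous_on_mult[OF continuous_on_compose2[OF assms(1) continuous_on_tangential subset_UNIV]
      continuous_on_compose2[OF assms(2) continuous_on_depth subset_UNIV]] .

lemma integrable_along_edge:
  assumes "f \<in> L2_on \<Omega>" and "continuous_on UNIV \<phi>" and "continuous_on UNIV c"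
  shows "integrable (lebesgue_on \<Omega>) (\<lambda>z. f z * (\<phi> (tangential z) * c (depth z)))"
  using assms bounded_domain sets_domain
  by (intro L2_on_integrable_mult_continuous continuous_on_along_edge)

lemma continuous_on_near_cutoff: "continuous_on UNIV (near_cutoff n)"
  using Ck_imp_continuous_on Ck_near_cutoff by blast

lemma continuous_on_far_cutoff: "continuous_on UNIV far_cutoff"
  using Ck_imp_continuous_on Ck_far_cutoff by blast

lemma tendsto_integral_near_cutoff:
  assumes f: "f \<in> L2_on \<Omega>" and \<phi>: "continuous_on UNIV \<phi>" and c: "continuous_on UNIV c"
  shows "(\<lambda>n. LINT z|lebesgue_on \<Omega>. f z * (\<phi> (tangential z) * (c (depth z) * near_cutoff n (depth z))))
    \<longlonglongrightarrow> (LINT z|lebesgue_on \<Omega>. f z * (\<phi> (tangential z) * c (depth z)))"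
proof (rule integral_dominated_convergence[where w = "\<lambda>z. \<bar>f z * (\<phi> (tangential z) * c (depth z))\<bar>"])
  have "continuous_on UNIV (\<lambda>t. c t * near_cutoff n t)" for n
    using c continuous_on_near_cutoff by (rule continuous_on_mult)
  then show "(\<lambda>z. f z * (\<phi> (tangential z) * (c (depth z) * near_cutoff n (depth z))))
      \<in> borel_measurable (lebesgue_on \<Omega>)" for n
    using integrable_along_edge[OF f \<phi>] borel_measurable_integrable by blast
  show "AE z in lebesgue_on \<Omega>.
    (\<lambda>n. f z * (\<phi> (tangential z) * (c (depth z) * near_cutoff n (depth z))))
      \<longlonglongrightarrow> f z * (\<phi> (tangential z) * c (depth z))"
  proof (rule AE_I2)
    fix z
    assume "z \<in> space (lebesgue_on \<Omega>)"
    then have "depth z > 0"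
      by (simp add: depth_pos space_restrict_space)
    obtain N :: nat where N: "2 / depth z \<le> N"
      using real_arch_simple by blast
    have "near_cutoff n (depth z) = 1" if "max N 1 \<le> n" for n
    proof (rule near_cutoff_eq_1)
      have "2 / depth z \<le> n"
        using N that of_nat_mono[of N n] by simp
      then show "2 / n \<le> depth z"
        using \<open>depth z > 0\<close> that by (simp add: field_simps)
    qed (use that in simp)
    then have "eventually (\<lambda>n. near_cutoff n (depth z) = 1) sequentially"
      by (rule eventually_sequentiallyI)
    then show "(\<lambda>n. f z * (\<phi> (tangential z) * (c (depth z) * near_cutoff n (depth z))))
      \<longlonglongrightarrow> f z * (\<phi> (tangential z) * c (depth z))"
      by (rule tendsto_eventually[OF eventually_mono]) simp
  qed
  show "AE z in lebesgue_on \<Omega>. norm (f z * (\<phi> (tangential z) * (c (depth z) * near_cutoff n (depth z))))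
      \<le> \<bar>f z * (\<phi> (tangential z) * c (depth z))\<bar>" for n
  proof (rule AE_I2)
    fix z
    have "\<bar>f z * (\<phi> (tangential z) * c (depth z))\<bar> * \<bar>near_cutoff n (depth z)\<bar>
        \<le> \<bar>f z * (\<phi> (tangential z) * c (depth z))\<bar> * 1"
      using ramp_bounds unfolding near_cutoff_def by (intro mult_left_mono) (auto simp: abs_le_iff)
    then show "norm (f z * (\<phi> (tangential z) * (c (depth z) * near_cutoff n (depth z))))
        \<le> \<bar>f z * (\<phi> (tangential z) * c (depth z))\<bar>"
      by (simp add: abs_mult mult.assoc)
  qed
qed (use integrable_along_edge[OF f \<phi> c] borel_measurable_integrable in simp_all)

definition approx_trace :: "(real \<times> real \<Rightarrow> real) \<Rightarrow> (real \<Rightarrow> real) \<Rightarrow> nat \<Rightarrow> real" where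
  "approx_trace \<theta> \<phi> n =
     (LINT z|lebesgue_on \<Omega>. \<theta> z * (\<phi> (tangential z) * deriv (near_cutoff n) (depth z)))"

text \<open>The Green formula for \<open>g = \<theta>\<^sub>y + \<lambda> \<theta>\<^sub>x\<close> tested against
  \<open>\<phi> (tangential z) * far_cutoff (depth z) * w (depth z)\<close>, solved for the term in which the
  derivative falls on \<open>w\<close>: for \<open>w = near_cutoff n\<close> that term is \<open>approx_trace\<close>, and \<open>w = 1\<close>
  gives the trace.\<close>

definition green_pairing ::
  "(real \<times> real \<Rightarrow> real) \<Rightarrow> (real \<times> real \<Rightarrow> real) \<Rightarrow> (real \<Rightarrow> real) \<Rightarrow> (real \<Rightarrow> real) \<Rightarrow> real" where
  "green_pairing \<theta> g \<phi> w =
     - ((LINT z|lebesgue_on \<Omega>. g z * (\<phi> (tangential z) * (far_cutoff (depth z) * w (depth z))))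
        + tangential_rate * (LINT z|lebesgue_on \<Omega>.
            \<theta> z * (deriv \<phi> (tangential z) * (far_cutoff (depth z) * w (depth z))))
        + normal_rate * (LINT z|lebesgue_on \<Omega>.
            \<theta> z * (\<phi> (tangential z) * (deriv far_cutoff (depth z) * w (depth z)))))
     / normal_rate"

lemma normal_rate_nonzero: "normal_rate \<noteq> 0"
  using transversal by (simp add: normal_rate_def)

lemma approx_trace_eq_green_pairing:
  assumes \<theta>: "\<theta> \<in> L2_on \<Omega>" and td: "transport_deriv lam \<Omega> \<theta> g"
    and \<phi>: "test_fun {0<..<Lt} \<phi>" and n: "n > 0" "n \<ge> 6 / Ln"
  shows "approx_trace \<theta> \<phi> n = green_pairing \<theta> g \<phi> (near_cutoff n)"
proof -
  note \<phi>' = test_fun_real_deriv[OF \<phi>]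
  let ?T1 = "LINT z|lebesgue_on \<Omega>.
    \<theta> z * (deriv \<phi> (tangential z) * (far_cutoff (depth z) * near_cutoff n (depth z)))"
  let ?T2 = "LINT z|lebesgue_on \<Omega>.
    \<theta> z * (\<phi> (tangential z) * (deriv far_cutoff (depth z) * near_cutoff n (depth z)))"
  have "(LINT z|lebesgue_on \<Omega>. g z * (\<phi> (tangential z) * (far_cutoff (depth z) * near_cutoff n (depth z))))
      = - (LINT z|lebesgue_on \<Omega>. \<theta> z * (pdy (lift n \<phi>) z + lam * pdx (lift n \<phi>) z))"
    using td lift_test_fun[OF n(1) \<phi>] by (simp add: transport_deriv_def lift_def[abs_def])
  also have "(LINT z|lebesgue_on \<Omega>. \<theta> z * (pdy (lift n \<phi>) z + lam * pdx (lift n \<phi>) z))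
      = (LINT z|lebesgue_on \<Omega>.
          tangential_rate * (\<theta> z * (deriv \<phi> (tangential z) * (far_cutoff (depth z) * near_cutoff n (depth z))))
        + normal_rate * (\<theta> z * (\<phi> (tangential z) * (deriv far_cutoff (depth z) * near_cutoff n (depth z))))
        + normal_rate * (\<theta> z * (\<phi> (tangential z) * deriv (near_cutoff n) (depth z))))"
    unfolding transport_lift[OF \<phi>'(1)] far_cutoff_mult_deriv_near_cutoff[OF n]
    by (simp add: algebra_simps)
  also have "\<dots> = tangential_rate * ?T1 + normal_rate * ?T2 + normal_rate * approx_trace \<theta> \<phi> n"
  proof -
    have c: "continuous_on UNIV (\<lambda>t. far_cutoff t * near_cutoff n t)"
      "continuous_on UNIV (\<lambda>t. deriv far_cutoff t * near_cutoff n t)"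
      using continuous_on_deriv_far_cutoff continuous_on_far_cutoff continuous_on_near_cutoff
      by (auto intro: continuous_on_mult)
    show ?thesis
      using integrable_along_edge[OF \<theta> \<phi>'(3) c(1)] integrable_along_edge[OF \<theta> \<phi>'(2) c(2)]
        integrable_along_edge[OF \<theta> \<phi>'(2) continuous_on_deriv_near_cutoff]
      by (simp add: approx_trace_def)
  qed
  finally show ?thesis
    using normal_rate_nonzero by (simp add: green_pairing_def field_simps)
qed

lemma approx_trace_tendsto_green_pairing:
  assumes \<theta>: "\<theta> \<in> L2_on \<Omega>" and g: "g \<in> L2_on \<Omega>" and td: "transport_deriv lam \<Omega> \<theta> g"
    and \<phi>: "test_fun {0<..<Lt} \<phi>"
  shows "approx_trace \<theta> \<phi> \<longlonglongrightarrow> green_pairing \<theta> g \<phi> (\<lambda>_. 1)"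
proof -
  note \<phi>' = test_fun_real_deriv[OF \<phi>]
  have lim: "(\<lambda>n. green_pairing \<theta> g \<phi> (near_cutoff n)) \<longlonglongrightarrow> green_pairing \<theta> g \<phi> (\<lambda>_. 1)"
    unfolding green_pairing_def
    using \<phi>'(2,3) continuous_on_far_cutoff continuous_on_deriv_far_cutoff normal_rate_nonzero
    by (simp only: mult_1_right) (intro tendsto_intros tendsto_integral_near_cutoff \<theta> g)
  have "eventually (\<lambda>n. approx_trace \<theta> \<phi> n = green_pairing \<theta> g \<phi> (near_cutoff n)) sequentially"
    using eventually_ge_at_top[of "nat \<lceil>6 / Ln\<rceil> + 1"]
  proof eventually_elim
    case (elim n)
    then have "n > 0" "6 / Ln \<le> n"
      by linarith+
    then show ?case
      by (rule approx_trace_eq_green_pairing[OF \<theta> td \<phi>])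
  qed
  from tendsto_cong[OF this] lim show ?thesis
    by simp
qed

lemma integral_along_edge_le:
  assumes f: "f \<in> L2_on \<Omega>" and \<phi>: "continuous_on UNIV \<phi>" and c: "continuous_on UNIV c"
  shows "\<bar>LINT z|lebesgue_on \<Omega>. f z * (\<phi> (tangential z) * c (depth z))\<bar>
    \<le> L2norm \<Omega> f * (sqrt (LINT t|lebesgue_on {0<..<Ln}. (c t)\<^sup>2)
                     * sqrt (LINT s|lebesgue_on {0<..<Lt}. (\<phi> s)\<^sup>2))"
proof -
  have "(LINT z|lebesgue_on \<Omega>. (\<phi> (tangential z) * c (depth z))\<^sup>2)
      = (LINT t|lebesgue_on {0<..<Ln}. (c t)\<^sup>2) * (LINT s|lebesgue_on {0<..<Lt}. (\<phi> s)\<^sup>2)"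
    using fubini[of "\<lambda>t. (c t)\<^sup>2" "\<lambda>s. (\<phi> s)\<^sup>2"] \<phi> c
    by (simp add: depth_def power_mult_distrib mult.commute continuous_intros)
  then show ?thesis
    using L2_on_integral_mult_continuous_le[OF f continuous_on_along_edge[OF \<phi> c] bounded_domain sets_domain]
    by (simp add: real_sqrt_mult)
qed

lemma green_pairing_bound:
  "\<exists>C \<ge> 0. \<forall>\<theta> g \<phi>. \<theta> \<in> L2_on \<Omega> \<longrightarrow> g \<in> L2_on \<Omega> \<longrightarrow> test_fun {0<..<Lt} \<phi> \<longrightarrow>
     \<bar>green_pairing \<theta> g \<phi> (\<lambda>_. 1)\<bar> \<le> C * (L2norm \<Omega> \<theta> + L2norm \<Omega> g) * H1norm 0 Lt \<phi>"
proof -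
  define A where "A = sqrt (LINT t|lebesgue_on {0<..<Ln}. (far_cutoff t)\<^sup>2)"
  define B where "B = sqrt (LINT t|lebesgue_on {0<..<Ln}. (deriv far_cutoff t)\<^sup>2)"
  have AB: "0 \<le> A" "0 \<le> B"
    by (simp_all add: A_def B_def integral_nonneg_AE)
  show ?thesis
  proof (intro exI[of _ "(A + \<bar>tangential_rate\<bar> * A + \<bar>normal_rate\<bar> * B) / \<bar>normal_rate\<bar>"]
      conjI allI impI)
    show "0 \<le> (A + \<bar>tangential_rate\<bar> * A + \<bar>normal_rate\<bar> * B) / \<bar>normal_rate\<bar>"
      using AB by simp
    fix \<theta> g \<phi>
    assume \<theta>: "\<theta> \<in> L2_on \<Omega>" and g: "g \<in> L2_on \<Omega>" and \<phi>: "test_fun {0<..<Lt} \<phi>"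
    note \<phi>' = test_fun_real_deriv[OF \<phi>]
    let ?H = "H1norm 0 Lt \<phi>"
    have "\<bar>LINT z|lebesgue_on \<Omega>. g z * (\<phi> (tangential z) * far_cutoff (depth z))\<bar>
        \<le> L2norm \<Omega> g * (A * ?H)"
      using integral_along_edge_le[OF g \<phi>'(2) continuous_on_far_cutoff, folded A_def]
        mult_left_mono[OF mult_left_mono[OF L2_le_H1norm(1) AB(1)] L2norm_nonneg] by (rule order_trans)
    moreover have "\<bar>LINT z|lebesgue_on \<Omega>. \<theta> z * (deriv \<phi> (tangential z) * far_cutoff (depth z))\<bar>
        \<le> L2norm \<Omega> \<theta> * (A * ?H)"
      using integral_along_edge_le[OF \<theta> \<phi>'(3) continuous_on_far_cutoff, folded A_def]
        mult_left_mono[OF mult_left_mono[OF L2_le_H1norm(2) AB(1)] L2norm_nonneg] by (rule order_trans)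
    moreover have "\<bar>LINT z|lebesgue_on \<Omega>. \<theta> z * (\<phi> (tangential z) * deriv far_cutoff (depth z))\<bar>
        \<le> L2norm \<Omega> \<theta> * (B * ?H)"
      using integral_along_edge_le[OF \<theta> \<phi>'(2) continuous_on_deriv_far_cutoff, folded B_def]
        mult_left_mono[OF mult_left_mono[OF L2_le_H1norm(1) AB(2)] L2norm_nonneg] by (rule order_trans)
    ultimately have "\<bar>green_pairing \<theta> g \<phi> (\<lambda>_. 1)\<bar>
        \<le> (L2norm \<Omega> g * (A * ?H) + \<bar>tangential_rate\<bar> * (L2norm \<Omega> \<theta> * (A * ?H))
           + \<bar>normal_rate\<bar> * (L2norm \<Omega> \<theta> * (B * ?H))) / \<bar>normal_rate\<bar>"
      (is "_ \<le> ?bound / _")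
      unfolding green_pairing_def abs_divide abs_minus_cancel
      by (intro divide_right_mono abs_triangle_ineq[THEN order_trans] add_mono
          abs_triangle_ineq[THEN order_trans]) (auto simp: abs_mult intro: mult_left_mono)
    also have "?bound \<le> (A + \<bar>tangential_rate\<bar> * A + \<bar>normal_rate\<bar> * B)
        * (L2norm \<Omega> \<theta> + L2norm \<Omega> g) * ?H"
      using AB H1norm_nonneg[of 0 Lt \<phi>] L2norm_nonneg[of \<Omega> \<theta>] L2norm_nonneg[of \<Omega> g]
      by (simp add: algebra_simps add_increasing2 add_increasing)
    finally show "\<bar>green_pairing \<theta> g \<phi> (\<lambda>_. 1)\<bar>
        \<le> (A + \<bar>tangential_rate\<bar> * A + \<bar>normal_rate\<bar> * B) / \<bar>normal_rate\<bar>
           * (L2norm \<Omega> \<theta> + L2norm \<Omega> g) * ?H"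
      using normal_rate_nonzero by (simp add: divide_right_mono)
  qed
qed

lemma integral_deriv_near_cutoff_along_edge:
  assumes G: "continuous_on UNIV G" and n: "n > 0" "2 / n \<le> Ln"
  shows "(LINT z|lebesgue_on \<Omega>. G (tangential z) * deriv (near_cutoff n) (depth z))
    = (LINT s|lebesgue_on {0<..<Lt}. G s)"
proof -
  have "(LINT t|lebesgue_on {0<..<Ln}. deriv (near_cutoff n) t) = 1"
    unfolding near_cutoff_def using n by (intro lebesgue_integral_deriv_ramp) (auto simp: divide_strict_right_mono)
  then show ?thesis
    using fubini[OF continuous_on_deriv_near_cutoff G] by (simp add: depth_def mult.commute)
qed

lemma approx_trace_edge_error:
  assumes \<theta>: "continuous_on UNIV \<theta>" and \<phi>: "continuous_on UNIV \<phi>" and n: "n > 0" "2 / n \<le> Ln"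
    and near_edge: "\<And>z. z \<in> \<Omega> \<Longrightarrow> depth z \<le> 2 / n \<Longrightarrow> \<bar>\<theta> z - \<theta> (edge (tangential z))\<bar> \<le> \<epsilon>"
  shows "\<bar>approx_trace \<theta> \<phi> n - (LINT s|lebesgue_on {0<..<Lt}. \<theta> (edge s) * \<phi> s)\<bar>
    \<le> \<epsilon> * (LINT s|lebesgue_on {0<..<Lt}. \<bar>\<phi> s\<bar>)"
proof -
  let ?K = "\<lambda>z. deriv (near_cutoff n) (depth z)"
  have \<theta>_edge: "continuous_on UNIV (\<lambda>s. \<theta> (edge s) * \<phi> s)"
    using \<theta> \<phi> by (intro continuous_on_mult continuous_on_compose2[OF \<theta> edge_continuous]) auto
  have integrable: "integrable (lebesgue_on \<Omega>) h" if "continuous_on UNIV h" for h :: "real \<times> real \<Rightarrow> real"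
    using that bounded_domain sets_domain by (rule integrable_continuous_on_bounded_set)
  have i1: "integrable (lebesgue_on \<Omega>) (\<lambda>z. \<theta> z * (\<phi> (tangential z) * ?K z))"
    by (intro integrable continuous_on_mult[OF \<theta>] continuous_on_along_edge[OF \<phi>]
        continuous_on_deriv_near_cutoff)
  have i2: "integrable (lebesgue_on \<Omega>) (\<lambda>z. \<theta> (edge (tangential z)) * \<phi> (tangential z) * ?K z)"
    by (intro integrable continuous_on_along_edge[OF \<theta>_edge] continuous_on_deriv_near_cutoff)
  have "approx_trace \<theta> \<phi> n - (LINT s|lebesgue_on {0<..<Lt}. \<theta> (edge s) * \<phi> s)
      = (LINT z|lebesgue_on \<Omega>. \<theta> z * (\<phi> (tangential z) * ?K z)
           - \<theta> (edge (tangential z)) * \<phi> (tangential z) * ?K z)"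
    unfolding approx_trace_def integral_deriv_near_cutoff_along_edge[OF \<theta>_edge n, symmetric]
    using i1 i2 by simp
  also have "\<dots> = (LINT z|lebesgue_on \<Omega>. (\<theta> z - \<theta> (edge (tangential z))) * (\<phi> (tangential z) * ?K z))"
    by (simp add: algebra_simps)
  also have "\<bar>\<dots>\<bar> \<le> (LINT z|lebesgue_on \<Omega>. \<epsilon> * (\<bar>\<phi> (tangential z)\<bar> * ?K z))"
  proof (rule integral_abs_bound[THEN order_trans], rule integral_mono)
    show "integrable (lebesgue_on \<Omega>) (\<lambda>z. \<epsilon> * (\<bar>\<phi> (tangential z)\<bar> * ?K z))"
      using \<phi> continuous_on_deriv_near_cutoff
      by (intro integrable integrable_mult_right continuous_on_mult continuous_on_const continuous_on_along_edge
          continuous_intros)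
    show "integrable (lebesgue_on \<Omega>) (\<lambda>z. \<bar>(\<theta> z - \<theta> (edge (tangential z))) * (\<phi> (tangential z) * ?K z)\<bar>)"
      using i1 i2 by (simp add: algebra_simps)
    fix z
    assume "z \<in> space (lebesgue_on \<Omega>)"
    then have z: "z \<in> \<Omega>"
      by (simp add: space_restrict_space)
    have K: "?K z \<ge> 0"
      using n by (simp add: deriv_near_cutoff_nonneg)
    show "\<bar>(\<theta> z - \<theta> (edge (tangential z))) * (\<phi> (tangential z) * ?K z)\<bar>
        \<le> \<epsilon> * (\<bar>\<phi> (tangential z)\<bar> * ?K z)"
    proof (cases "depth z \<le> 2 / n")
      case True
      then show ?thesis
        using near_edge[OF z] K by (simp add: abs_mult mult_right_mono)
    next
      case False
      then show ?thesis
        using n by (simp add: deriv_near_cutoff_eq_0)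
    qed
  qed
  also have "\<dots> = \<epsilon> * (LINT s|lebesgue_on {0<..<Lt}. \<bar>\<phi> s\<bar>)"
    using integral_deriv_near_cutoff_along_edge[OF _ n, of "\<lambda>s. \<bar>\<phi> s\<bar>"] \<phi>
    by (simp add: continuous_intros)
  finally show ?thesis .
qed

lemma close_to_edge:
  fixes \<theta> :: "real \<times> real \<Rightarrow> real"
  assumes \<theta>: "continuous_on UNIV \<theta>" and "\<epsilon> > 0"
  obtains \<delta> where "\<delta> > 0" and "\<And>z. z \<in> \<Omega> \<Longrightarrow> depth z < \<delta> \<Longrightarrow> \<bar>\<theta> z - \<theta> (edge (tangential z))\<bar> < \<epsilon>"
proof -
  have "compact (closure \<Omega> \<union> edge ` {0..Lt})"
    using bounded_domain
    by (intro compact_Un compact_closure[THEN iffD2] compact_continuous_image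
        continuous_on_subset[OF edge_continuous] compact_Icc) auto
  then have "uniformly_continuous_on (closure \<Omega> \<union> edge ` {0..Lt}) \<theta>"
    by (intro compact_uniformly_continuous continuous_on_subset[OF \<theta>]) auto
  then obtain \<delta> where "\<delta> > 0" and \<delta>: "\<And>x y. x \<in> closure \<Omega> \<union> edge ` {0..Lt} \<Longrightarrow>
      y \<in> closure \<Omega> \<union> edge ` {0..Lt} \<Longrightarrow> dist y x < \<delta> \<Longrightarrow> dist (\<theta> y) (\<theta> x) < \<epsilon>"
    using \<open>\<epsilon> > 0\<close> unfolding uniformly_continuous_on_def by metis
  have "\<bar>\<theta> z - \<theta> (edge (tangential z))\<bar> < \<epsilon>" if "z \<in> \<Omega>" "depth z < \<delta>" for z
  proof -
    have "dist z (edge (tangential z)) < \<delta>"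
      using that dist_edge[of z] depth_pos[of z] by (simp add: depth_def)
    moreover have "edge (tangential z) \<in> edge ` {0..Lt}"
      using that domain_iff by auto
    ultimately show ?thesis
      using \<delta>[of "edge (tangential z)" z] that closure_subset by (force simp: dist_real_def)
  qed
  with \<open>\<delta> > 0\<close> show ?thesis
    using that by blast
qed

lemma approx_trace_tendsto_edge_integral:
  assumes \<theta>: "continuous_on UNIV \<theta>" and \<phi>: "continuous_on UNIV \<phi>"
  shows "approx_trace \<theta> \<phi> \<longlonglongrightarrow> (LINT s|lebesgue_on {0<..<Lt}. \<theta> (edge s) * \<phi> s)"
proof (rule LIMSEQ_I)
  fix r :: real
  assume "r > 0"
  define I where "I = (LINT s|lebesgue_on {0<..<Lt}. \<bar>\<phi> s\<bar>)"
  define \<epsilon> where "\<epsilon> = r / (2 * (I + 1))"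
  have "I \<ge> 0"
    unfolding I_def by (rule integral_nonneg_AE) simp
  then have "\<epsilon> > 0"
    using \<open>r > 0\<close> by (simp add: \<epsilon>_def)
  have "\<epsilon> * I = r * (I / (2 * (I + 1)))"
    by (simp add: \<epsilon>_def)
  also have "\<dots> < r * 1"
    using \<open>I \<ge> 0\<close> \<open>r > 0\<close> by (intro mult_strict_left_mono) (simp_all add: field_simps)
  finally have "\<epsilon> * I < r"
    by simp
  obtain \<delta> where "\<delta> > 0" and \<delta>: "\<And>z. z \<in> \<Omega> \<Longrightarrow> depth z < \<delta> \<Longrightarrow> \<bar>\<theta> z - \<theta> (edge (tangential z))\<bar> < \<epsilon>"
    using close_to_edge[OF \<theta> \<open>\<epsilon> > 0\<close>] by blast
  obtain N :: nat where N: "max 1 (max (2 / Ln) (3 / \<delta>)) \<le> N"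
    using real_arch_simple by blast
  have "\<bar>approx_trace \<theta> \<phi> n - (LINT s|lebesgue_on {0<..<Lt}. \<theta> (edge s) * \<phi> s)\<bar> < r"
    if "N \<le> n" for n
  proof -
    have "1 \<le> real n" "2 / Ln \<le> n" "3 / \<delta> \<le> n"
      using N of_nat_mono[OF that] by (simp_all add: max.bounded_iff)
    then have n: "n > 0" "2 / n \<le> Ln" "2 / n < \<delta>"
      using Ln_pos \<open>\<delta> > 0\<close> by (auto simp: field_simps)
    have "\<bar>approx_trace \<theta> \<phi> n - (LINT s|lebesgue_on {0<..<Lt}. \<theta> (edge s) * \<phi> s)\<bar> \<le> \<epsilon> * I"
      unfolding I_def using n \<delta> by (intro approx_trace_edge_error[OF \<theta> \<phi> n(1,2)]) force
    then show ?thesis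
      using \<open>\<epsilon> * I < r\<close> by linarith
  qed
  then show "\<exists>N. \<forall>n\<ge>N. norm (approx_trace \<theta> \<phi> n - (LINT s|lebesgue_on {0<..<Lt}. \<theta> (edge s) * \<phi> s)) < r"
    by auto
qed

definition edge_trace :: "(real \<times> real \<Rightarrow> real) \<Rightarrow> (real \<Rightarrow> real) \<Rightarrow> real" where
  "edge_trace \<theta> \<phi> = lim (approx_trace \<theta> \<phi>)"

lemma edge_trace_eq_green_pairing:
  assumes "\<theta> \<in> L2_on \<Omega>" "g \<in> L2_on \<Omega>" "transport_deriv lam \<Omega> \<theta> g" "test_fun {0<..<Lt} \<phi>"
  shows "edge_trace \<theta> \<phi> = green_pairing \<theta> g \<phi> (\<lambda>_. 1)"
  using approx_trace_tendsto_green_pairing[OF assms] by (simp add: edge_trace_def limI)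

lemma approx_trace_tendsto_edge_trace:
  assumes "\<theta> \<in> X1 lam \<Omega>" and \<phi>: "test_fun {0<..<Lt} \<phi>"
  shows "approx_trace \<theta> \<phi> \<longlonglongrightarrow> edge_trace \<theta> \<phi>"
proof -
  obtain g where "\<theta> \<in> L2_on \<Omega>" "g \<in> L2_on \<Omega>" "transport_deriv lam \<Omega> \<theta> g"
    using assms(1) by (auto simp: X1_def)
  with \<phi> show ?thesis
    using approx_trace_tendsto_green_pairing edge_trace_eq_green_pairing by metis
qed

lemma approx_trace_linear_left:
  assumes "\<theta> \<in> L2_on \<Omega>" "\<eta> \<in> L2_on \<Omega>" and "continuous_on UNIV \<phi>"
  shows "approx_trace (\<lambda>z. \<alpha> * \<theta> z + \<beta> * \<eta> z) \<phi> n = \<alpha> * approx_trace \<theta> \<phi> n + \<beta> * approx_trace \<eta> \<phi> n"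
  using integrable_along_edge[OF assms(1,3) continuous_on_deriv_near_cutoff]
    integrable_along_edge[OF assms(2,3) continuous_on_deriv_near_cutoff]
  by (simp add: approx_trace_def distrib_right mult.assoc)

lemma approx_trace_linear_right:
  assumes "\<theta> \<in> L2_on \<Omega>" and "continuous_on UNIV \<phi>" "continuous_on UNIV \<psi>"
  shows "approx_trace \<theta> (\<lambda>s. \<alpha> * \<phi> s + \<beta> * \<psi> s) n = \<alpha> * approx_trace \<theta> \<phi> n + \<beta> * approx_trace \<theta> \<psi> n"
  using integrable_along_edge[OF assms(1,2) continuous_on_deriv_near_cutoff]
    integrable_along_edge[OF assms(1,3) continuous_on_deriv_near_cutoff]
  by (simp add: approx_trace_def algebra_simps)

lemma edge_trace_linear_right:
  assumes \<theta>: "\<theta> \<in> X1 lam \<Omega>" and \<phi>: "test_fun {0<..<Lt} \<phi>" and \<psi>: "test_fun {0<..<Lt} \<psi>"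
  shows "edge_trace \<theta> (\<lambda>s. \<alpha> * \<phi> s + \<beta> * \<psi> s) = \<alpha> * edge_trace \<theta> \<phi> + \<beta> * edge_trace \<theta> \<psi>"
proof -
  have eq: "approx_trace \<theta> (\<lambda>s. \<alpha> * \<phi> s + \<beta> * \<psi> s)
      = (\<lambda>n. \<alpha> * approx_trace \<theta> \<phi> n + \<beta> * approx_trace \<theta> \<psi> n)"
    using \<theta> approx_trace_linear_right[OF _ test_fun_real_deriv(2)[OF \<phi>] test_fun_real_deriv(2)[OF \<psi>]]
    by (auto simp: X1_def)
  have "approx_trace \<theta> (\<lambda>s. \<alpha> * \<phi> s + \<beta> * \<psi> s) \<longlonglongrightarrow> \<alpha> * edge_trace \<theta> \<phi> + \<beta> * edge_trace \<theta> \<psi>"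
    unfolding eq by (intro tendsto_intros approx_trace_tendsto_edge_trace \<theta> \<phi> \<psi>)
  then show ?thesis
    by (simp add: edge_trace_def limI)
qed

lemma edge_trace_linear_left:
  assumes \<theta>: "\<theta> \<in> X1 lam \<Omega>" and \<eta>: "\<eta> \<in> X1 lam \<Omega>" and \<phi>: "test_fun {0<..<Lt} \<phi>"
  shows "edge_trace (\<lambda>z. \<alpha> * \<theta> z + \<beta> * \<eta> z) \<phi> = \<alpha> * edge_trace \<theta> \<phi> + \<beta> * edge_trace \<eta> \<phi>"
proof -
  have L2: "\<theta> \<in> L2_on \<Omega>" "\<eta> \<in> L2_on \<Omega>"
    using \<theta> \<eta> by (simp_all add: X1_def)
  have "approx_trace (\<lambda>z. \<alpha> * \<theta> z + \<beta> * \<eta> z) \<phi> \<longlonglongrightarrow> \<alpha> * edge_trace \<theta> \<phi> + \<beta> * edge_trace \<eta> \<phi>"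
    unfolding approx_trace_linear_left[OF L2 test_fun_real_deriv(2)[OF \<phi>]]
    by (intro tendsto_intros approx_trace_tendsto_edge_trace \<theta> \<eta> \<phi>)
  then show ?thesis
    by (simp add: edge_trace_def limI)
qed

lemma edge_trace_bound:
  obtains C where "C \<ge> 0" and "\<And>\<theta> g \<phi>. \<theta> \<in> L2_on \<Omega> \<Longrightarrow> g \<in> L2_on \<Omega> \<Longrightarrow>
      transport_deriv lam \<Omega> \<theta> g \<Longrightarrow> test_fun {0<..<Lt} \<phi> \<Longrightarrow>
      \<bar>edge_trace \<theta> \<phi>\<bar> \<le> C * (L2norm \<Omega> \<theta> + L2norm \<Omega> g) * H1norm 0 Lt \<phi>"
  using green_pairing_bound edge_trace_eq_green_pairing by metis

lemma edge_trace_bound_X1norm: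
  "\<exists>C. \<forall>\<theta> \<in> X1 lam \<Omega>. \<forall>\<phi>. test_fun {0<..<Lt} \<phi> \<longrightarrow>
     \<bar>edge_trace \<theta> \<phi>\<bar> \<le> C * X1norm lam \<Omega> \<theta> * H1norm 0 Lt \<phi>"
proof -
  obtain C where "C \<ge> 0" and C: "\<And>\<theta> g \<phi>. \<theta> \<in> L2_on \<Omega> \<Longrightarrow> g \<in> L2_on \<Omega> \<Longrightarrow>
      transport_deriv lam \<Omega> \<theta> g \<Longrightarrow> test_fun {0<..<Lt} \<phi> \<Longrightarrow>
      \<bar>edge_trace \<theta> \<phi>\<bar> \<le> C * (L2norm \<Omega> \<theta> + L2norm \<Omega> g) * H1norm 0 Lt \<phi>"
    using edge_trace_bound by blast
  have "\<bar>edge_trace \<theta> \<phi>\<bar> \<le> 2 * C * X1norm lam \<Omega> \<theta> * H1norm 0 Lt \<phi>"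
    if \<theta>: "\<theta> \<in> X1 lam \<Omega>" and \<phi>: "test_fun {0<..<Lt} \<phi>" for \<theta> \<phi>
  proof -
    define g where "g = (SOME g. g \<in> L2_on \<Omega> \<and> transport_deriv lam \<Omega> \<theta> g)"
    have "\<theta> \<in> L2_on \<Omega>" "g \<in> L2_on \<Omega>" "transport_deriv lam \<Omega> \<theta> g"
      using someI_ex[of "\<lambda>g. g \<in> L2_on \<Omega> \<and> transport_deriv lam \<Omega> \<theta> g"] \<theta>
      unfolding g_def X1_def by auto
    then have "\<bar>edge_trace \<theta> \<phi>\<bar> \<le> C * (L2norm \<Omega> \<theta> + L2norm \<Omega> g) * H1norm 0 Lt \<phi>"
      using C \<phi> by blast
    also have "\<dots> \<le> C * (X1norm lam \<Omega> \<theta> + X1norm lam \<Omega> \<theta>) * H1norm 0 Lt \<phi>"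
      using L2norm_le_X1norm \<open>C \<ge> 0\<close> H1norm_nonneg
      unfolding g_def by (intro mult_right_mono mult_left_mono add_mono) auto
    finally show ?thesis
      by simp
  qed
  then show ?thesis
    by blast
qed

lemma edge_trace_Ck:
  assumes "Ck 1 \<theta>" and "test_fun {0<..<Lt} \<phi>"
  shows "edge_trace \<theta> \<phi> = (LINT s|lebesgue_on {0<..<Lt}. \<theta> (edge s) * \<phi> s)"
  using approx_trace_tendsto_edge_integral[OF Ck_imp_continuous_on[OF assms(1)]
      test_fun_real_deriv(2)[OF assms(2)]]
  by (simp add: edge_trace_def limI)

theorem is_trace_op_edge_trace: "is_trace_op lam \<Omega> 0 Lt (\<lambda>\<theta> s. \<theta> (edge s)) edge_trace"
proof -
  have "in_Hm1 0 Lt (edge_trace \<theta>)" if \<theta>: "\<theta> \<in> X1 lam \<Omega>" for \<theta>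
  proof -
    obtain g where "\<theta> \<in> L2_on \<Omega>" "g \<in> L2_on \<Omega>" "transport_deriv lam \<Omega> \<theta> g"
      using \<theta> by (auto simp: X1_def)
    with edge_trace_bound obtain C where "\<forall>\<phi>. test_fun {0<..<Lt} \<phi> \<longrightarrow>
        \<bar>edge_trace \<theta> \<phi>\<bar> \<le> C * (L2norm \<Omega> \<theta> + L2norm \<Omega> g) * H1norm 0 Lt \<phi>"
      by metis
    then show ?thesis
      using edge_trace_linear_right[OF \<theta>] unfolding in_Hm1_def by (metis mult.assoc)
  qed
  then show ?thesis
    unfolding is_trace_op_def
    using edge_trace_linear_left edge_trace_bound_X1norm edge_trace_Ck by blast
qed

end

section \<open>The four edges of the rectangle\<close>

lemma bounded_rectangle: "bounded ({a<..<b} \<times> {c<..<d :: real})" for a b :: real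
  by (intro bounded_Times) auto

lemma sets_lebesgue_rectangle: "{a<..<b} \<times> {c<..<d :: real} \<in> sets lebesgue" for a b :: real
  by (simp add: open_Times borel_open sets_completionI_sets)

lemma trace_op_left_edge:
  assumes "L1 > 0" and "lam \<noteq> 0"
  shows "\<exists>T. is_trace_op lam ({0<..<L1} \<times> {0<..<L2}) 0 L2 (\<lambda>\<theta> y. \<theta> (0, y)) T"
proof -
  interpret rectangle_edge lam "{0<..<L1} \<times> {0<..<L2}" fst snd 0 L1 L2 "\<lambda>y. (0, y)"
  proof (rule rectangle_edge.intro)
    show "(LINT z|lebesgue_on ({0<..<L1} \<times> {0<..<L2}). F (0 + fst z) * G (snd z))
      = (LINT x|lebesgue_on {0<..<L1}. F x) * (LINT y|lebesgue_on {0<..<L2}. G y)"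
      if "continuous_on UNIV F" "continuous_on UNIV G" for F G :: "real \<Rightarrow> real"
      using lebesgue_integral_rectangle_product[OF that] by simp
    show "dist z (0, snd z) = \<bar>0 + fst z\<bar>" for z :: "real \<times> real"
      by (simp add: dist_prod_def dist_real_def)
  qed (use assms in \<open>auto simp: bounded_rectangle sets_lebesgue_rectangle bounded_linear_fst
      bounded_linear_snd intro: continuous_intros\<close>)
  show ?thesis
    using is_trace_op_edge_trace by blast
qed

lemma trace_op_right_edge:
  assumes "L1 > 0" and "lam \<noteq> 0"
  shows "\<exists>T. is_trace_op lam ({0<..<L1} \<times> {0<..<L2}) 0 L2 (\<lambda>\<theta> y. \<theta> (L1, y)) T"
proof -
  interpret rectangle_edge lam "{0<..<L1} \<times> {0<..<L2}" "\<lambda>z. - fst z" snd L1 L1 L2 "\<lambda>y. (L1, y)"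
  proof (rule rectangle_edge.intro)
    show "(LINT z|lebesgue_on ({0<..<L1} \<times> {0<..<L2}). F (L1 + - fst z) * G (snd z))
      = (LINT x|lebesgue_on {0<..<L1}. F x) * (LINT y|lebesgue_on {0<..<L2}. G y)"
      if "continuous_on UNIV F" "continuous_on UNIV G" for F G :: "real \<Rightarrow> real"
      using lebesgue_integral_rectangle_product[OF _ that(2), of "\<lambda>x. F (L1 - x)"]
        lebesgue_integral_Ioo_reflect[OF that(1)]
      by (simp add: continuous_on_compose2[OF that(1)] continuous_intros)
    show "dist z (L1, snd z) = \<bar>L1 + - fst z\<bar>" for z :: "real \<times> real"
      by (simp add: dist_prod_def dist_real_def abs_minus_commute)
  qed (use assms in \<open>auto simp: bounded_rectangle sets_lebesgue_rectangle bounded_linear_minus[OF bounded_linear_fst]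
      bounded_linear_snd intro: continuous_intros\<close>)
  show ?thesis
    using is_trace_op_edge_trace by blast
qed

lemma trace_op_bottom_edge:
  assumes "L2 > 0"
  shows "\<exists>T. is_trace_op lam ({0<..<L1} \<times> {0<..<L2}) 0 L1 (\<lambda>\<theta> x. \<theta> (x, 0)) T"
proof -
  interpret rectangle_edge lam "{0<..<L1} \<times> {0<..<L2}" snd fst 0 L2 L1 "\<lambda>x. (x, 0)"
  proof (rule rectangle_edge.intro)
    show "(LINT z|lebesgue_on ({0<..<L1} \<times> {0<..<L2}). F (0 + snd z) * G (fst z))
      = (LINT y|lebesgue_on {0<..<L2}. F y) * (LINT x|lebesgue_on {0<..<L1}. G x)"
      if "continuous_on UNIV F" "continuous_on UNIV G" for F G :: "real \<Rightarrow> real"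
      using lebesgue_integral_rectangle_product[OF that(2,1)] by (simp add: mult.commute)
    show "dist z (fst z, 0) = \<bar>0 + snd z\<bar>" for z :: "real \<times> real"
      by (simp add: dist_prod_def dist_real_def)
  qed (use assms in \<open>auto simp: bounded_rectangle sets_lebesgue_rectangle bounded_linear_fst
      bounded_linear_snd intro: continuous_intros\<close>)
  show ?thesis
    using is_trace_op_edge_trace by blast
qed

lemma trace_op_top_edge:
  assumes "L2 > 0"
  shows "\<exists>T. is_trace_op lam ({0<..<L1} \<times> {0<..<L2}) 0 L1 (\<lambda>\<theta> x. \<theta> (x, L2)) T"
proof -
  interpret rectangle_edge lam "{0<..<L1} \<times> {0<..<L2}" "\<lambda>z. - snd z" fst L2 L2 L1 "\<lambda>x. (x, L2)"
  proof (rule rectangle_edge.intro)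
    show "(LINT z|lebesgue_on ({0<..<L1} \<times> {0<..<L2}). F (L2 + - snd z) * G (fst z))
      = (LINT y|lebesgue_on {0<..<L2}. F y) * (LINT x|lebesgue_on {0<..<L1}. G x)"
      if "continuous_on UNIV F" "continuous_on UNIV G" for F G :: "real \<Rightarrow> real"
      using lebesgue_integral_rectangle_product[OF that(2), of "\<lambda>y. F (L2 - y)"]
        lebesgue_integral_Ioo_reflect[OF that(1)]
      by (simp add: continuous_on_compose2[OF that(1)] continuous_intros mult.commute)
    show "dist z (fst z, L2) = \<bar>L2 + - snd z\<bar>" for z :: "real \<times> real"
      by (simp add: dist_prod_def dist_real_def abs_minus_commute)
  qed (use assms in \<open>auto simp: bounded_rectangle sets_lebesgue_rectangle bounded_linear_minus[OF bounded_linear_snd]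
      bounded_linear_fst intro: continuous_intros\<close>)
  show ?thesis
    using is_trace_op_edge_trace by blast
qed

theorem proposition2p3:
  fixes L1 L2 lam :: real
  assumes "L1 > 0" and "L2 > 0" and "lam \<noteq> 0"
  defines "\<Omega> \<equiv> {0<..<L1} \<times> {0<..<L2}"
  shows "(\<exists>T. is_trace_op lam \<Omega> 0 L2 (\<lambda>\<theta> y. \<theta> (0, y)) T) \<and>
         (\<exists>T. is_trace_op lam \<Omega> 0 L2 (\<lambda>\<theta> y. \<theta> (L1, y)) T) \<and>
         (\<exists>T. is_trace_op lam \<Omega> 0 L1 (\<lambda>\<theta> x. \<theta> (x, 0)) T) \<and>
         (\<exists>T. is_trace_op lam \<Omega> 0 L1 (\<lambda>\<theta> x. \<theta> (x, L2)) T)"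
  unfolding \<Omega>_def
  using trace_op_left_edge trace_op_right_edge trace_op_bottom_edge trace_op_top_edge assms
  by blast

end
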